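(* Let $\mathbf{M}_1,\dots,\mathbf{M}_L$ be nonsingular $D\times D$ integer matrices and $\mathbf{R}$ an lcrm of them. Suppose there exist pairwise commutative and coprime integer matrices $\mathbf{N}_1,\dots,\mathbf{N}_L$ and a unimodular matrix $\mathbf{U}$ such that $\mathbf{R}=\mathbf{N}_1\mathbf{N}_2\cdots\mathbf{N}_L\mathbf{U}$ and $\mathbf{N}_i$ is a left divisor of $\mathbf{M}_i$ for each $i$. Let $\mathbf{W}_i=\mathbf{N}_1\cdots\mathbf{N}_{i-1}\mathbf{N}_{i+1}\cdots\mathbf{N}_L$. For each $i$ such that $\mathbf{N}_i$ is not unimodular there exist integer matrices $\widehat{\mathbf{W}}_i,\mathbf{Q}_i$ with $\mathbf{W}_i\widehat{\mathbf{W}}_i+\mathbf{N}_i\mathbf{Q}_i=\mathbf{I}$; fix such $\widehat{\mathbf{W}}_i$, and set $\widehat{\mathbf{W}}_i=\mathbf{0}$ if $\mathbf{N}_i$ is unimodular. Then for every $\mathbf{m}\in\mathcal{N}(\mathbf{R})$ with remainders $\mathbf{r}_i=\langle\mathbf{m}\rangle_{\mathbf{M}_i}$, $$\mathbf{m}=\Big\langle\sum_{i=1}^L\mathbf{W}_i\widehat{\mathbf{W}}_i\mathbf{r}_i\Big\rangle_{\mathbf{R}}.$$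
   Context: All matrices are $D\times D$ integer matrices; $\mathbf{I}$ is the identity. Unimodular: integer with determinant $\pm1$. $\mathbf{A}$ is a left divisor of $\mathbf{M}$ if $\mathbf{A}^{-1}\mathbf{M}$ is an integer matrix. Commuting nonsingular integer matrices are coprime if all their common left (equivalently right) divisors are unimodular. An lcrm of $\mathbf{M}_1,\dots,\mathbf{M}_L$ is a nonsingular integer $\mathbf{R}$ with $\mathbf{R}=\mathbf{M}_i\mathbf{P}_i$ ($\mathbf{P}_i$ integer) for all $i$ such that every such common right multiple equals $\mathbf{R}\mathbf{A}$ for some integer $\mathbf{A}$. For nonsingular integer $\mathbf{M}$, $\mathcal{N}(\mathbf{M})=\{\mathbf{k}\in\mathbb{Z}^D:\mathbf{k}=\mathbf{M}\mathbf{x},\ \mathbf{x}\in[0,1)^D\}$, and $\langle\mathbf{m}\rangle_{\mathbf{M}}$ is the unique $\mathbf{r}\in\mathcal{N}(\mathbf{M})$ with $\mathbf{m}-\mathbf{r}\in\{\mathbf{M}\mathbf{n}:\mathbf{n}\in\mathbb{Z}^D\}$. *)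

theory Defs
  imports "HOL-Analysis.Analysis"
begin

text \<open>D x D integer matrices are rendered as int ^'n ^'n (D = CARD('n)).\<close>

definition nonsingular :: "int^'n^'n \<Rightarrow> bool" where
  "nonsingular A \<longleftrightarrow> det A \<noteq> 0"

definition unimodular :: "int^'n^'n \<Rightarrow> bool" where
  "unimodular A \<longleftrightarrow> det A = 1 \<or> det A = -1"

text \<open>A (nonsingular) is a left divisor of M iff A^-1 M is an integer matrix,
  i.e. M = A P for an integer matrix P.\<close>
definition left_divisor :: "int^'n^'n \<Rightarrow> int^'n^'n \<Rightarrow> bool" where
  "left_divisor A M \<longleftrightarrow> nonsingular A \<and> (\<exists>P. M = A ** P)"

definition coprime_mat :: "int^'n^'n \<Rightarrow> int^'n^'n \<Rightarrow> bool" where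
  "coprime_mat A B \<longleftrightarrow> (\<forall>C. left_divisor C A \<and> left_divisor C B \<longrightarrow> unimodular C)"

definition is_lcrm :: "nat \<Rightarrow> (nat \<Rightarrow> int^'n^'n) \<Rightarrow> int^'n^'n \<Rightarrow> bool" where
  "is_lcrm L M R \<longleftrightarrow> nonsingular R \<and> (\<forall>i\<in>{1..L}. \<exists>P. R = M i ** P) \<and>
     (\<forall>S. nonsingular S \<and> (\<forall>i\<in>{1..L}. \<exists>P. S = M i ** P) \<longrightarrow> (\<exists>A. S = R ** A))"

definition real_mat :: "int^'n^'n \<Rightarrow> real^'n^'n" where
  "real_mat A = (\<chi> i j. real_of_int (A $ i $ j))"

definition real_vec :: "int^'n \<Rightarrow> real^'n" where
  "real_vec v = (\<chi> i. real_of_int (v $ i))"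

definition fund_set :: "int^'n^'n \<Rightarrow> (int^'n) set" where
  "fund_set M = {k. \<exists>x::real^'n. (\<forall>i. 0 \<le> x $ i \<and> x $ i < 1) \<and> real_vec k = real_mat M *v x}"

definition mat_rem :: "int^'n \<Rightarrow> int^'n^'n \<Rightarrow> int^'n" where
  "mat_rem m M = (THE r. r \<in> fund_set M \<and> (\<exists>n. m - r = M *v n))"

definition mprod :: "nat list \<Rightarrow> (nat \<Rightarrow> int^'n^'n) \<Rightarrow> int^'n^'n" where
  "mprod xs f = foldr (\<lambda>i acc. f i ** acc) xs (mat 1)"

end

theory Submission
  imports Defs
begin

text \<open>
  Put \<open>x = \<Sum>i. W\<^sub>i \<hat>W\<^sub>i r\<^sub>i\<close>. For \<open>j \<noteq> i\<close> the commuting factor \<open>N\<^sub>i\<close> can be moved to the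
  left of \<open>W\<^sub>j\<close>, while \<open>W\<^sub>i \<hat>W\<^sub>i \<equiv> I\<close> and \<open>r\<^sub>i \<equiv> m\<close> modulo \<open>N\<^sub>i\<close>; hence \<open>x \<equiv> m\<close> modulo every
  \<open>N\<^sub>i\<close>. Coprimality of two integer matrices means that the lattice \<open>A\<int>\<^sup>D + B\<int>\<^sup>D\<close>, whose basis
  matrix is a common left divisor, is all of \<open>\<int>\<^sup>D\<close>; for commuting \<open>A\<close>, \<open>B\<close> this makes
  \<open>u \<mapsto> Au\<close> surjective, hence injective, on the finite group \<open>\<int>\<^sup>D/B\<int>\<^sup>D\<close>, which gives
  \<open>A\<int>\<^sup>D \<inter> B\<int>\<^sup>D \<subseteq> AB\<int>\<^sup>D\<close>. So \<open>x \<equiv> m\<close> modulo \<open>N\<^sub>1\<cdots>N\<^sub>L U = R\<close>, and since \<open>m\<close> already lies in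
  \<open>\<N>(R)\<close> it is the remainder of \<open>x\<close>.
\<close>

section \<open>Integer lattices\<close>

lemma column_matrix_mult: "column j (A ** B) = A *v column j B"
  by (simp add: column_def matrix_matrix_mult_def matrix_vector_mult_def vec_eq_iff)

lemma column_of_columns: "column j (\<chi> i j. c j $ i) = c j"
  by (simp add: column_def vec_eq_iff)

lemma column_add: "column j (A + B) = column j A + column j B"
  by (simp add: column_def vec_eq_iff)

lemma matrix_eq_iff_columns: "A = B \<longleftrightarrow> (\<forall>j. column j A = column j B)"
  by (auto simp: column_def vec_eq_iff)

lemma matrix_vector_mult_smult:
  fixes A :: "'a::comm_semiring_1^'n^'m"
  shows "A *v (c *s x) = c *s (A *v x)"
  by (simp add: vec_eq_iff matrix_vector_mult_def sum_distrib_left algebra_simps)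

definition int_lattice :: "int^'n^'n \<Rightarrow> (int^'n) set" where
  "int_lattice A = range ((*v) A)"

lemma matrix_vector_mult_in_int_lattice [simp]: "A *v x \<in> int_lattice A"
  by (simp add: int_lattice_def)

lemma int_lattice_zero [simp]: "0 \<in> int_lattice A"
  using matrix_vector_mult_in_int_lattice[of A 0] by simp

lemma int_lattice_add: "u \<in> int_lattice A \<Longrightarrow> v \<in> int_lattice A \<Longrightarrow> u + v \<in> int_lattice A"
  by (auto simp: int_lattice_def matrix_vector_right_distrib[symmetric])

lemma int_lattice_scale: "u \<in> int_lattice A \<Longrightarrow> c *s u \<in> int_lattice A"
  by (auto simp: int_lattice_def matrix_vector_mult_smult[symmetric])

lemma int_lattice_diff: "u \<in> int_lattice A \<Longrightarrow> v \<in> int_lattice A \<Longrightarrow> u - v \<in> int_lattice A"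
  using int_lattice_add[of u A "(-1) *s v"] int_lattice_scale[of v A "-1"]
  by (simp add: vector_sneg_minus1[symmetric])

lemma int_lattice_sum:
  "finite I \<Longrightarrow> (\<And>i. i \<in> I \<Longrightarrow> f i \<in> int_lattice A) \<Longrightarrow> sum f I \<in> int_lattice A"
  by (induction I rule: finite_induct) (auto intro: int_lattice_add)

lemma int_lattice_matrix_mult_subset: "int_lattice (A ** B) \<subseteq> int_lattice A"
  by (auto simp: int_lattice_def matrix_vector_mul_assoc[symmetric])

lemma left_divisor_iff_columns:
  "(\<exists>P. A = C ** P) \<longleftrightarrow> (\<forall>j. column j A \<in> int_lattice C)"
proof
  assume "\<forall>j. column j A \<in> int_lattice C"
  then have "\<forall>j. \<exists>p. column j A = C *v p" by (auto simp: int_lattice_def)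
  then obtain p where p: "\<And>j. column j A = C *v p j" by metis
  have "A = C ** (\<chi> i j. p j $ i)"
    by (simp add: matrix_eq_iff_columns column_matrix_mult column_of_columns p)
  then show "\<exists>P. A = C ** P" by blast
next
  assume "\<exists>P. A = C ** P"
  then show "\<forall>j. column j A \<in> int_lattice C"
    by (metis column_matrix_mult matrix_vector_mult_in_int_lattice)
qed

lemma column_in_int_lattice: "column j A \<in> int_lattice A"
  using left_divisor_iff_columns[of A A] by (metis matrix_mul_rid)

lemma real_vec_eq_iff: "real_vec x = real_vec y \<longleftrightarrow> x = y"
  by (simp add: real_vec_def vec_eq_iff)

lemma real_mat_mult_real_vec: "real_mat A *v real_vec x = real_vec (A *v x)"
  by (simp add: real_mat_def real_vec_def vec_eq_iff matrix_vector_mult_def)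

lemma real_vec_diff: "real_vec (x - y) = real_vec x - real_vec y"
  by (simp add: real_vec_def vec_eq_iff)

lemma real_vec_scale: "real_vec (c *s x) = of_int c *s real_vec x"
  by (simp add: real_vec_def vec_eq_iff)

lemma det_real_mat: "det (real_mat A) = of_int (det A)"
  by (simp add: det_def real_mat_def)

lemma invertible_real_mat: "nonsingular M \<Longrightarrow> invertible (real_mat M)"
  by (simp add: invertible_det_nz det_real_mat nonsingular_def)

text \<open>Cramer's rule over \<open>\<real>\<close>: the numerators are determinants of integer matrices.\<close>

lemma det_scaled_in_int_lattice:
  fixes A :: "int^'n^'n"
  assumes "det A \<noteq> 0"
  shows "det A *s v \<in> int_lattice A"
proof -
  define y where "y = (\<chi> k. det (\<chi> i j. if j = k then v $ i else A $ i $ j))"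
  have d: "det (real_mat A) \<noteq> 0"
    using assms by (simp add: det_real_mat)
  have numerator: "det (\<chi> i j. if j = k then real_vec v $ i else real_mat A $ i $ j) = y $ k" for k
  proof -
    have "(\<chi> i j. if j = k then real_vec v $ i else real_mat A $ i $ j)
        = real_mat (\<chi> i j. if j = k then v $ i else A $ i $ j)"
      by (simp add: real_mat_def real_vec_def vec_eq_iff)
    then show ?thesis by (simp add: det_real_mat y_def)
  qed
  define x where "x = (\<chi> k. det (\<chi> i j. if j = k then real_vec v $ i else real_mat A $ i $ j)
    / det (real_mat A))"
  have "real_mat A *v x = real_vec v"
    using cramer[OF d, of x "real_vec v"] by (simp add: x_def)
  moreover have "real_vec y = det (real_mat A) *s x"
    using d by (simp add: x_def real_vec_def vec_eq_iff numerator)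
  ultimately have "real_mat A *v real_vec y = det (real_mat A) *s real_vec v"
    by (simp add: vector_scalar_commute)
  then have "real_vec (A *v y) = real_vec (det A *s v)"
    by (simp only: real_mat_mult_real_vec real_vec_scale det_real_mat)
  then show ?thesis
    by (metis real_vec_eq_iff matrix_vector_mult_in_int_lattice)
qed

lemma int_lattice_unimodular: "unimodular A \<Longrightarrow> int_lattice A = UNIV"
proof -
  assume "unimodular A"
  then have d: "det A * det A = 1" by (auto simp: unimodular_def)
  have "v \<in> int_lattice A" for v
  proof -
    have "det A *s (det A *s v) \<in> int_lattice A"
      using d by (intro int_lattice_scale det_scaled_in_int_lattice) auto
    then show ?thesis using d by simp
  qed
  then show ?thesis by blast
qed

lemma int_lattice_mult_unimodular:
  assumes "unimodular U" shows "int_lattice (P ** U) = int_lattice P"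
proof
  show "int_lattice P \<subseteq> int_lattice (P ** U)"
  proof
    fix v assume "v \<in> int_lattice P"
    then obtain w where "v = P *v w" unfolding int_lattice_def by blast
    moreover obtain z where "w = U *v z"
      using int_lattice_unimodular[OF assms] unfolding int_lattice_def by blast
    ultimately show "v \<in> int_lattice (P ** U)"
      by (simp add: matrix_vector_mul_assoc)
  qed
qed (rule int_lattice_matrix_mult_subset)

section \<open>Residue classes modulo a nonsingular lattice\<close>

definition lattice_coset :: "int^'n^'n \<Rightarrow> int^'n \<Rightarrow> (int^'n) set" where
  "lattice_coset B u = {w. w - u \<in> int_lattice B}"

lemma lattice_coset_eq_iff: "lattice_coset B u = lattice_coset B w \<longleftrightarrow> u - w \<in> int_lattice B"
proof
  assume "lattice_coset B u = lattice_coset B w"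
  moreover have "u \<in> lattice_coset B u" by (simp add: lattice_coset_def)
  ultimately show "u - w \<in> int_lattice B" by (simp add: lattice_coset_def)
next
  assume uw: "u - w \<in> int_lattice B"
  have "x - u \<in> int_lattice B \<longleftrightarrow> x - w \<in> int_lattice B" for x
    using int_lattice_add[OF _ uw, of "x - u"] int_lattice_diff[OF _ uw, of "x - w"] by auto
  then show "lattice_coset B u = lattice_coset B w" by (auto simp: lattice_coset_def)
qed

text \<open>Every coset meets the box \<open>[0, |det B|)\<^sup>D\<close>, because \<open>|det B| \<int>\<^sup>D \<subseteq> B\<int>\<^sup>D\<close>.\<close>

lemma finite_lattice_cosets:
  fixes B :: "int^'n^'n"
  assumes "det B \<noteq> 0" shows "finite (range (lattice_coset B))"
proof -
  define d where "d = \<bar>det B\<bar>"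
  define box :: "(int^'n) set" where "box = vec_lambda ` (Pi\<^sub>E UNIV (\<lambda>_. {0..<d}))"
  have d_multiples: "d *s q \<in> int_lattice B" for q
    using int_lattice_scale[OF det_scaled_in_int_lattice[OF assms], of "sgn (det B)" q]
    by (simp add: d_def abs_sgn mult.commute)
  have "lattice_coset B u \<in> lattice_coset B ` box" for u
  proof
    have "u - (\<chi> i. u $ i mod d) = d *s (\<chi> i. u $ i div d)"
      by (simp add: vec_eq_iff minus_mod_eq_mult_div[symmetric] mult.commute)
    then show "lattice_coset B u = lattice_coset B (\<chi> i. u $ i mod d)"
      by (simp add: lattice_coset_eq_iff d_multiples)
    have "d > 0" using assms by (simp add: d_def)
    then have "(\<lambda>i. u $ i mod d) \<in> Pi\<^sub>E UNIV (\<lambda>_. {0..<d})" by (simp add: PiE_iff)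
    then show "(\<chi> i. u $ i mod d) \<in> box" unfolding box_def by blast
  qed
  then have "range (lattice_coset B) \<subseteq> lattice_coset B ` box" by blast
  moreover have "finite box" unfolding box_def by (intro finite_imageI finite_PiE) auto
  ultimately show ?thesis by (meson finite_imageI finite_subset)
qed

section \<open>Comaximal matrices\<close>

definition comaximal :: "int^'n^'n \<Rightarrow> int^'n^'n \<Rightarrow> bool" where
  "comaximal A B \<longleftrightarrow> (\<forall>v. \<exists>x y. v = A *v x + B *v y)"

lemma comaximal_sym: "comaximal A B \<Longrightarrow> comaximal B A"
  unfolding comaximal_def by (metis add.commute)

lemma comaximal_mat_1: "comaximal A (mat 1)"
  unfolding comaximal_def by (metis add_0 matrix_vector_mult_0_right matrix_vector_mul_lid)

lemma comaximal_mult: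
  assumes "comaximal A B" "comaximal A C" "A ** C = C ** A" "B ** C = C ** B"
  shows "comaximal A (B ** C)"
  unfolding comaximal_def
proof
  fix v
  obtain a c where "v = A *v a + C *v c" using assms(2) unfolding comaximal_def by blast
  moreover obtain a' b' where "c = A *v a' + B *v b'" using assms(1) unfolding comaximal_def by blast
  ultimately have "v = A *v (a + C *v a') + (B ** C) *v b'"
    by (simp add: matrix_vector_right_distrib matrix_vector_mul_assoc assms(3,4) add.assoc)
  then show "\<exists>x y. v = A *v x + (B ** C) *v y" by blast
qed

lemma comaximal_bezout:
  assumes "comaximal A B" shows "\<exists>X Y. A ** X + B ** Y = mat 1"
proof -
  have "\<forall>j. \<exists>x y. column j (mat 1) = A *v x + B *v y"
    using assms unfolding comaximal_def by blast
  then obtain x y where xy: "\<And>j. column j (mat 1) = A *v x j + B *v y j" by metis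
  have "A ** (\<chi> i j. x j $ i) + B ** (\<chi> i j. y j $ i) = mat 1"
    by (simp add: matrix_eq_iff_columns column_add column_matrix_mult column_of_columns xy)
  then show ?thesis by blast
qed

text \<open>Comaximality makes \<open>u \<mapsto> Au\<close> surjective on the finite set \<open>\<int>\<^sup>D/B\<int>\<^sup>D\<close>, hence injective.\<close>

lemma comaximal_cancel:
  assumes cm: "comaximal A B" and AB: "A ** B = B ** A" and dB: "det B \<noteq> 0"
    and Aa: "A *v a \<in> int_lattice B"
  shows "a \<in> int_lattice B"
proof -
  let ?cls = "lattice_coset B"
  define \<Phi> where "\<Phi> X = (\<Union>u\<in>X. ?cls (A *v u))" for X
  have \<Phi>: "\<Phi> (?cls v) = ?cls (A *v v)" for v
  proof -
    have "?cls (A *v u) = ?cls (A *v v)" if u: "u \<in> ?cls v" for u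
    proof -
      obtain z where "u - v = B *v z" using u by (auto simp: lattice_coset_def int_lattice_def)
      then have "A *v u - A *v v = B *v (A *v z)"
        by (metis AB matrix_vector_mul_assoc matrix_vector_mult_diff_distrib)
      then show ?thesis by (simp add: lattice_coset_eq_iff)
    qed
    moreover have "v \<in> ?cls v" by (simp add: lattice_coset_def)
    ultimately show ?thesis unfolding \<Phi>_def by (intro UN_constant_eq) blast+
  qed
  have "range ?cls \<subseteq> \<Phi> ` range ?cls"
  proof clarify
    fix w
    obtain x y where "w = A *v x + B *v y" using cm unfolding comaximal_def by blast
    then have "?cls w = \<Phi> (?cls x)" by (simp add: \<Phi> lattice_coset_eq_iff)
    then show "?cls w \<in> \<Phi> ` range ?cls" by blast
  qed
  then have "inj_on \<Phi> (range ?cls)"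
    using finite_surj_inj[OF finite_lattice_cosets[OF dB]] by blast
  moreover have "\<Phi> (?cls a) = \<Phi> (?cls 0)"
    using Aa by (simp add: \<Phi> lattice_coset_eq_iff)
  ultimately have "?cls a = ?cls 0" by (meson inj_onD rangeI)
  then show ?thesis by (simp add: lattice_coset_eq_iff)
qed

lemma int_lattice_Int_comaximal:
  assumes "comaximal A B" "A ** B = B ** A" "det B \<noteq> 0"
  shows "int_lattice A \<inter> int_lattice B \<subseteq> int_lattice (A ** B)"
proof clarify
  fix v assume "v \<in> int_lattice A" "v \<in> int_lattice B"
  then obtain a where a: "v = A *v a" unfolding int_lattice_def by blast
  with \<open>v \<in> int_lattice B\<close> have "a \<in> int_lattice B" using comaximal_cancel assms by blast
  then obtain c where "a = B *v c" unfolding int_lattice_def by blast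
  then show "v \<in> int_lattice (A ** B)" by (simp add: a matrix_vector_mul_assoc)
qed

section \<open>Coprimality\<close>

text \<open>
  A full-rank submodule \<open>S\<close> of \<open>\<int>\<^sup>D\<close> has a triangular basis with respect to an ordering \<open>f\<close>
  of the coordinates; its \<open>k\<close>-th vector has the smallest positive \<open>k\<close>-th entry among the
  elements of \<open>S\<close> that vanish above \<open>k\<close>.
\<close>

lemma int_submodule_pivot:
  fixes S :: "(int^'n) set" and f :: "'n \<Rightarrow> nat"
  assumes add: "\<And>u v. u \<in> S \<Longrightarrow> v \<in> S \<Longrightarrow> u + v \<in> S"
    and scale: "\<And>u c. u \<in> S \<Longrightarrow> c *s u \<in> S"
    and v0: "v0 \<in> S" "\<forall>j. f k < f j \<longrightarrow> v0 $ j = 0" "v0 $ k \<noteq> 0"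
  obtains b where "b \<in> S" "\<forall>j. f k < f j \<longrightarrow> b $ j = 0" "b $ k > 0"
    "\<And>v. v \<in> S \<Longrightarrow> \<forall>j. f k < f j \<longrightarrow> v $ j = 0 \<Longrightarrow> b $ k dvd v $ k"
proof -
  let ?T = "{v \<in> S. \<forall>j. f k < f j \<longrightarrow> v $ j = 0}"
  let ?P = "\<lambda>n::nat. n > 0 \<and> (\<exists>v\<in>?T. v $ k = int n)"
  have "sgn (v0 $ k) *s v0 \<in> ?T" using v0 scale by simp
  moreover have "(sgn (v0 $ k) *s v0) $ k = int (nat \<bar>v0 $ k\<bar>)" by (simp add: sgn_if)
  ultimately have "?P (nat \<bar>v0 $ k\<bar>)" using v0(3) by fastforce
  then have "?P (Least ?P)" by (rule LeastI)
  then obtain b where b: "b \<in> ?T" "b $ k = int (Least ?P)" "Least ?P > 0" by blast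
  have "b $ k dvd v $ k" if v: "v \<in> ?T" for v
  proof -
    define w where "w = v + (- (v $ k div b $ k)) *s b"
    have "w \<in> ?T" using v b(1) add scale by (auto simp: w_def)
    have w_k: "w $ k = v $ k mod b $ k" by (simp add: w_def minus_div_mult_eq_mod[symmetric])
    have "0 \<le> w $ k" "w $ k < b $ k" using w_k b(2,3) by simp_all
    have "w $ k = 0"
    proof (rule ccontr)
      assume "w $ k \<noteq> 0"
      then have "?P (nat (w $ k))" using \<open>w \<in> ?T\<close> \<open>0 \<le> w $ k\<close> by auto
      then have "Least ?P \<le> nat (w $ k)" by (rule Least_le)
      then have "int (Least ?P) \<le> w $ k" using \<open>0 \<le> w $ k\<close> by (simp add: le_nat_iff)
      then show False using \<open>w $ k < b $ k\<close> b(2) by linarith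
    qed
    then show ?thesis by (simp add: w_k dvd_eq_mod_eq_0)
  qed
  with b that show ?thesis by auto
qed

lemma int_submodule_in_triangular_lattice:
  fixes S :: "(int^'n) set" and b :: "'n \<Rightarrow> int^'n" and f :: "'n \<Rightarrow> nat"
  assumes add: "\<And>u v. u \<in> S \<Longrightarrow> v \<in> S \<Longrightarrow> u + v \<in> S"
    and scale: "\<And>u c. u \<in> S \<Longrightarrow> c *s u \<in> S"
    and "inj f" and b_S: "\<And>k. b k \<in> S" and b_upper: "\<And>k j. f k < f j \<Longrightarrow> b k $ j = 0"
    and b_dvd: "\<And>k v. v \<in> S \<Longrightarrow> \<forall>j. f k < f j \<longrightarrow> v $ j = 0 \<Longrightarrow> b k $ k dvd v $ k"
    and "v \<in> S" "\<forall>j. m \<le> f j \<longrightarrow> v $ j = 0"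
  shows "v \<in> int_lattice (\<chi> i j. b j $ i)"
  using assms(7-)
proof (induction m arbitrary: v)
  case 0
  then have "v = 0" by (simp add: vec_eq_iff)
  then show ?case by simp
next
  case (Suc m)
  show ?case
  proof (cases "\<exists>k. f k = m")
    case False
    with Suc show ?thesis by (metis Suc_leI le_neq_implies_less)
  next
    case True
    then obtain k where k: "f k = m" by blast
    define q where "q = v $ k div b k $ k"
    have "b k $ k dvd v $ k"
      using b_dvd[OF Suc.prems(1)] Suc.prems(2) k by (simp add: Suc_le_eq)
    then have "v $ k - q * b k $ k = 0" by (simp add: q_def)
    then have "\<forall>j. m \<le> f j \<longrightarrow> (v - q *s b k) $ j = 0"
      using Suc.prems(2) b_upper k \<open>inj f\<close> by (metis Suc_le_eq injD le_neq_implies_less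
          diff_zero mult_zero_right vector_minus_component vector_smult_component)
    moreover have "v - q *s b k \<in> S"
      using add scale Suc.prems(1) b_S[of k] scale[of _ "-1"]
      by (metis diff_conv_add_uminus vector_sneg_minus1)
    ultimately have "v - q *s b k \<in> int_lattice (\<chi> i j. b j $ i)" using Suc.IH by blast
    then have "(v - q *s b k) + q *s column k (\<chi> i j. b j $ i) \<in> int_lattice (\<chi> i j. b j $ i)"
      by (intro int_lattice_add int_lattice_scale column_in_int_lattice)
    then show ?thesis by (simp add: column_of_columns)
  qed
qed

lemma int_submodule_basis:
  fixes S :: "(int^'n) set"
  assumes add: "\<And>u v. u \<in> S \<Longrightarrow> v \<in> S \<Longrightarrow> u + v \<in> S"
    and scale: "\<And>u c. u \<in> S \<Longrightarrow> c *s u \<in> S"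
    and d: "d \<noteq> 0" and full: "\<And>k. d *s axis k 1 \<in> S"
  shows "\<exists>C. int_lattice C = S \<and> det C \<noteq> 0"
proof -
  have "\<exists>(f :: 'n \<Rightarrow> nat) n. range f = {i. i < n} \<and> inj f"
    by (rule finite_imp_inj_to_nat_seg) simp
  then obtain f :: "'n \<Rightarrow> nat" and n where f: "inj f" "\<And>j. f j < n" by blast
  have "\<exists>b. b \<in> S \<and> (\<forall>j. f k < f j \<longrightarrow> b $ j = 0) \<and> (\<forall>v\<in>S.
      (\<forall>j. f k < f j \<longrightarrow> v $ j = 0) \<longrightarrow> b $ k dvd v $ k)" for k
    by (rule int_submodule_pivot[OF add scale full, of f k]) (auto simp: axis_def d)
  then obtain b where b: "\<And>k. b k \<in> S" "\<And>k j. f k < f j \<Longrightarrow> b k $ j = 0"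
    "\<And>k v. v \<in> S \<Longrightarrow> \<forall>j. f k < f j \<longrightarrow> v $ j = 0 \<Longrightarrow> b k $ k dvd v $ k"
    by metis
  define C where "C = (\<chi> i j. b j $ i)"
  have "0 \<in> S" using scale[OF full, of 0 undefined] by simp
  have "(\<Sum>j\<in>F. x $ j *s b j) \<in> S" if "finite F" for F x
    using that by (induction F rule: finite_induct) (auto intro: add scale b(1) \<open>0 \<in> S\<close>)
  then have "int_lattice C \<subseteq> S"
    by (auto simp: int_lattice_def matrix_mult_sum C_def column_of_columns)
  moreover have "v \<in> int_lattice C" if "v \<in> S" for v
  proof -
    have "\<forall>j. n \<le> f j \<longrightarrow> v $ j = 0" using f(2) by (meson leD)
    with add scale f(1) b that show ?thesis
      unfolding C_def by (rule int_submodule_in_triangular_lattice)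
  qed
  ultimately have lat: "int_lattice C = S" by blast
  have "column j (mat d) = d *s axis j 1" for j :: 'n
    by (simp add: column_def mat_def axis_def vec_eq_iff)
  then have "\<exists>P. mat d = C ** P"
    using full by (simp add: left_divisor_iff_columns lat)
  moreover have "det (mat d :: int^'n^'n) \<noteq> 0"
    using d by (subst det_diagonal) (auto simp: mat_def)
  ultimately have "det C \<noteq> 0" by (metis det_mul mult_zero_left)
  with lat show ?thesis by blast
qed

text \<open>\<open>A\<int>\<^sup>D + B\<int>\<^sup>D\<close> is \<open>C\<int>\<^sup>D\<close> for a common left divisor \<open>C\<close>, which must be unimodular.\<close>

lemma coprime_mat_imp_comaximal:
  assumes ns: "nonsingular A" and cp: "coprime_mat A B"
  shows "comaximal A B"
proof -
  define S where "S = {A *v x + B *v y | x y. True}"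
  have add: "u + v \<in> S" if uv: "u \<in> S" "v \<in> S" for u v
  proof -
    obtain x y x' y' where "u = A *v x + B *v y" "v = A *v x' + B *v y'"
      using uv unfolding S_def by blast
    then have "u + v = A *v (x + x') + B *v (y + y')"
      by (simp add: algebra_simps)
    then show ?thesis unfolding S_def by blast
  qed
  have scale: "c *s u \<in> S" if u: "u \<in> S" for u c
  proof -
    obtain x y where "u = A *v x + B *v y" using u unfolding S_def by blast
    then have "c *s u = A *v (c *s x) + B *v (c *s y)"
      by (simp add: matrix_vector_mult_smult)
    then show ?thesis unfolding S_def by blast
  qed
  have dA: "det A \<noteq> 0" using ns unfolding nonsingular_def .
  have full: "det A *s axis k 1 \<in> S" for k
  proof -
    obtain y where "det A *s axis k 1 = A *v y + B *v 0"
      using det_scaled_in_int_lattice[OF dA] by (auto simp: int_lattice_def)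
    then show ?thesis unfolding S_def by blast
  qed
  obtain C where C: "int_lattice C = S" "det C \<noteq> 0"
    using int_submodule_basis[OF add scale dA full] by blast
  have "column j A = A *v column j (mat 1) + B *v 0" "column j B = A *v 0 + B *v column j (mat 1)"
    for j by (simp_all flip: column_matrix_mult)
  then have "column j A \<in> S" "column j B \<in> S" for j
    unfolding S_def by blast+
  then have "left_divisor C A" "left_divisor C B"
    using C by (simp_all add: left_divisor_def nonsingular_def left_divisor_iff_columns)
  then have "int_lattice C = UNIV"
    using cp int_lattice_unimodular unfolding coprime_mat_def by blast
  then show ?thesis unfolding comaximal_def using C(1) S_def by blast
qed

section \<open>Remainders\<close>

lemma fund_set_congruent_eq:
  assumes ns: "nonsingular M" and r: "r \<in> fund_set M" "r' \<in> fund_set M"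
    and "r - r' \<in> int_lattice M"
  shows "r = r'"
proof -
  obtain n where n: "r - r' = M *v n" using assms(4) unfolding int_lattice_def by blast
  obtain x x' where x: "\<forall>i. 0 \<le> x $ i \<and> x $ i < 1" "real_vec r = real_mat M *v x"
    and x': "\<forall>i. 0 \<le> x' $ i \<and> x' $ i < 1" "real_vec r' = real_mat M *v x'"
    using r unfolding fund_set_def by blast
  obtain B where B: "B ** real_mat M = mat 1"
    using invertible_real_mat[OF ns] unfolding invertible_def by blast
  have "real_mat M *v real_vec n = real_mat M *v (x - x')"
    by (metis n x(2) x'(2) real_mat_mult_real_vec real_vec_diff matrix_vector_mult_diff_distrib)
  then have "real_vec n = x - x'"
    by (metis B matrix_vector_mul_assoc matrix_vector_mul_lid)
  then have "real_of_int (n $ i) = x $ i - x' $ i" for i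
    by (simp add: real_vec_def vec_eq_iff)
  then have "n $ i = 0" for i
    using x(1) x'(1) by (smt (verit) of_int_less_1_iff of_int_less_iff of_int_minus)
  then have "n = 0" by (simp add: vec_eq_iff)
  then show ?thesis using n by simp
qed

lemma fund_set_representative:
  assumes "nonsingular M"
  shows "\<exists>r\<in>fund_set M. m - r \<in> int_lattice M"
proof -
  obtain B where B: "real_mat M ** B = mat 1"
    using invertible_real_mat[OF assms] unfolding invertible_def by blast
  define x where "x = B *v real_vec m"
  define n where "n = (\<chi> i. \<lfloor>x $ i\<rfloor>)"
  have "real_vec (m - M *v n) = real_mat M *v (x - real_vec n)"
    by (simp add: x_def real_vec_diff matrix_vector_mult_diff_distrib matrix_vector_mul_assoc B
        flip: real_mat_mult_real_vec)
  moreover have "\<forall>i. 0 \<le> (x - real_vec n) $ i \<and> (x - real_vec n) $ i < 1"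
    by (simp add: n_def real_vec_def) linarith
  ultimately have "m - M *v n \<in> fund_set M" unfolding fund_set_def by blast
  then show ?thesis by force
qed

lemma mat_rem:
  assumes "nonsingular M"
  shows "mat_rem m M \<in> fund_set M" "m - mat_rem m M \<in> int_lattice M"
proof -
  have lattice_iff: "u \<in> int_lattice M \<longleftrightarrow> (\<exists>n. u = M *v n)" for u
    by (auto simp: int_lattice_def)
  have "\<exists>!r. r \<in> fund_set M \<and> m - r \<in> int_lattice M"
  proof (rule ex_ex1I)
    show "\<exists>r. r \<in> fund_set M \<and> m - r \<in> int_lattice M"
      using fund_set_representative[OF assms] by blast
  next
    fix r r' assume "r \<in> fund_set M \<and> m - r \<in> int_lattice M" "r' \<in> fund_set M \<and> m - r' \<in> int_lattice M"
    then show "r = r'"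
      using fund_set_congruent_eq[OF assms] int_lattice_diff[of "m - r'" M "m - r"] by auto
  qed
  then have "mat_rem m M \<in> fund_set M \<and> (\<exists>n. m - mat_rem m M = M *v n)"
    unfolding mat_rem_def lattice_iff by (rule theI')
  then show "mat_rem m M \<in> fund_set M" "m - mat_rem m M \<in> int_lattice M"
    by (simp_all add: lattice_iff)
qed

lemma mat_rem_unique:
  assumes "nonsingular M" "r \<in> fund_set M" "m - r \<in> int_lattice M"
  shows "mat_rem m M = r"
proof (rule fund_set_congruent_eq[OF assms(1) mat_rem(1)[OF assms(1)] assms(2)])
  show "mat_rem m M - r \<in> int_lattice M"
    using int_lattice_diff[OF assms(3) mat_rem(2)[OF assms(1), of m]] by simp
qed

section \<open>Products of commuting matrices\<close>

lemma mprod_Nil [simp]: "mprod [] N = mat 1"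
  by (simp add: mprod_def)

lemma mprod_Cons [simp]: "mprod (j # xs) N = N j ** mprod xs N"
  by (simp add: mprod_def)

lemma mprod_commute:
  "\<forall>j\<in>set xs. A ** N j = N j ** A \<Longrightarrow> A ** mprod xs N = mprod xs N ** A"
  by (induction xs) (auto simp: matrix_mul_assoc[symmetric], metis matrix_mul_assoc)

lemma mprod_left_factor:
  assumes "i \<in> set xs" and "pairwise (\<lambda>a b. N a ** N b = N b ** N a) (set xs)"
  shows "\<exists>P. mprod xs N = N i ** P"
  using assms
proof (induction xs)
  case (Cons j xs)
  show ?case
  proof (cases "j = i")
    case False
    have "i \<in> set xs" using Cons.prems(1) False by simp
    moreover have "pairwise (\<lambda>a b. N a ** N b = N b ** N a) (set xs)"
      using Cons.prems(2) by (rule pairwise_subset) auto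
    ultimately obtain P where P: "mprod xs N = N i ** P" using Cons.IH by blast
    have ji: "N j ** N i = N i ** N j"
      using pairwiseD[OF Cons.prems(2), of j i] \<open>i \<in> set xs\<close> False by simp
    have "mprod (j # xs) N = (N j ** N i) ** P"
      by (simp add: P matrix_mul_assoc)
    also have "\<dots> = N i ** (N j ** P)"
      unfolding ji by (simp add: matrix_mul_assoc)
    finally show ?thesis by blast
  qed auto
qed simp

lemma comaximal_mprod:
  assumes "pairwise (\<lambda>a b. N a ** N b = N b ** N a) (set xs)"
    and "\<forall>j\<in>set xs. comaximal A (N j) \<and> A ** N j = N j ** A"
  shows "comaximal A (mprod xs N)"
  using assms
proof (induction xs)
  case (Cons j xs)
  have "N j ** N k = N k ** N j" if "k \<in> set xs" for k
    using pairwiseD[OF Cons.prems(1), of j k] that by (cases "k = j") simp_all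
  then have "N j ** mprod xs N = mprod xs N ** N j"
    by (intro mprod_commute) simp
  moreover have "A ** mprod xs N = mprod xs N ** A"
    using Cons.prems(2) by (intro mprod_commute) auto
  moreover have "comaximal A (mprod xs N)"
    using Cons.prems pairwise_subset[OF Cons.prems(1)] by (intro Cons.IH) auto
  ultimately show ?case
    using Cons.prems(2) by (simp only: mprod_Cons) (rule comaximal_mult, simp_all)
qed (simp add: comaximal_mat_1)

lemma int_lattice_Inter_mprod:
  assumes "distinct xs"
    and "pairwise (\<lambda>a b. N a ** N b = N b ** N a \<and> comaximal (N a) (N b)) (set xs)"
    and "\<forall>j\<in>set xs. det (N j) \<noteq> 0"
    and "\<forall>j\<in>set xs. v \<in> int_lattice (N j)"
  shows "v \<in> int_lattice (mprod xs N)"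
  using assms
proof (induction xs)
  case Nil
  then show ?case by (simp add: int_lattice_unimodular unimodular_def)
next
  case (Cons j xs)
  have pw: "pairwise (\<lambda>a b. N a ** N b = N b ** N a) (set xs)"
    by (rule pairwise_mono[OF Cons.prems(2)]) auto
  have others: "\<forall>k\<in>set xs. comaximal (N j) (N k) \<and> N j ** N k = N k ** N j"
  proof
    fix k assume k: "k \<in> set xs"
    then have "j \<noteq> k" using Cons.prems(1) by auto
    then show "comaximal (N j) (N k) \<and> N j ** N k = N k ** N j"
      using pairwiseD[OF Cons.prems(2), of j k] k by simp
  qed
  have "comaximal (N j) (mprod xs N)" using comaximal_mprod[OF pw others] .
  moreover have "N j ** mprod xs N = mprod xs N ** N j"
    using others by (intro mprod_commute) auto
  moreover have "det (mprod xs N) \<noteq> 0"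
    using Cons.prems(3) by (induction xs) (auto simp: det_mul)
  moreover have "v \<in> int_lattice (mprod xs N)"
    using Cons.prems pairwise_subset[OF Cons.prems(2)] by (intro Cons.IH) auto
  ultimately show ?case
    using int_lattice_Int_comaximal Cons.prems(4) by fastforce
qed

section \<open>Reconstruction from residues\<close>

lemma sum_congruent_to_component:
  assumes "finite I" "i \<in> I"
    and bezout: "W i ** Wh i + N i ** Q = mat 1"
    and rem: "m - r i \<in> int_lattice (N i)"
    and others: "\<And>j. j \<in> I - {i} \<Longrightarrow> \<exists>P. W j = N i ** P"
  shows "(\<Sum>j\<in>I. (W j ** Wh j) *v r j) - m \<in> int_lattice (N i)"
proof -
  have "(W i ** Wh i) *v r i - m = - (m - r i) - N i *v (Q *v r i)"
    using arg_cong[OF bezout, of "\<lambda>X. X *v r i"]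
    by (simp add: matrix_vector_mul_assoc algebra_simps)
  then have "(W i ** Wh i) *v r i - m \<in> int_lattice (N i)"
    using int_lattice_diff[OF int_lattice_scale[OF rem, of "-1"]] by (simp add: vector_sneg_minus1)
  moreover have "(W j ** Wh j) *v r j \<in> int_lattice (N i)" if "j \<in> I - {i}" for j
    using others[OF that] int_lattice_matrix_mult_subset
    by (auto simp: matrix_vector_mul_assoc[symmetric] matrix_mul_assoc)
  ultimately have "((W i ** Wh i) *v r i - m) + (\<Sum>j\<in>I - {i}. (W j ** Wh j) *v r j)
      \<in> int_lattice (N i)"
    using assms(1) by (intro int_lattice_add int_lattice_sum) auto
  then show ?thesis
    using assms(1,2) by (simp add: sum.remove algebra_simps)
qed

lemma comaximal_mprod_others:
  assumes pw: "pairwise (\<lambda>a b. N a ** N b = N b ** N a \<and> comaximal (N a) (N b)) (set xs)"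
    and i: "i \<in> set xs"
  shows "comaximal (N i) (mprod (filter (\<lambda>j. j \<noteq> i) xs) N)"
proof (rule comaximal_mprod)
  show "pairwise (\<lambda>a b. N a ** N b = N b ** N a) (set (filter (\<lambda>j. j \<noteq> i) xs))"
    by (rule pairwise_mono[OF pw]) auto
  show "\<forall>j\<in>set (filter (\<lambda>j. j \<noteq> i) xs). comaximal (N i) (N j) \<and> N i ** N j = N j ** N i"
    unfolding set_filter using pairwiseD[OF pw] i by blast
qed

lemma chinese_remainder_mprod:
  fixes xs :: "nat list" and N Wh :: "nat \<Rightarrow> int^'n^'n" and r :: "nat \<Rightarrow> int^'n"
  defines "W \<equiv> \<lambda>i. mprod (filter (\<lambda>j. j \<noteq> i) xs) N"
  assumes dist: "distinct xs"
    and pw: "pairwise (\<lambda>a b. N a ** N b = N b ** N a \<and> comaximal (N a) (N b)) (set xs)"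
    and ns: "\<forall>j\<in>set xs. det (N j) \<noteq> 0"
    and bezout: "\<forall>i\<in>set xs. \<not> unimodular (N i) \<longrightarrow> (\<exists>Q. W i ** Wh i + N i ** Q = mat 1)"
    and rem: "\<forall>i\<in>set xs. m - r i \<in> int_lattice (N i)"
  shows "(\<Sum>i\<in>set xs. (W i ** Wh i) *v r i) - m \<in> int_lattice (mprod xs N)"
proof (rule int_lattice_Inter_mprod[OF dist pw ns], rule ballI)
  fix i assume i: "i \<in> set xs"
  show "(\<Sum>j\<in>set xs. (W j ** Wh j) *v r j) - m \<in> int_lattice (N i)"
  proof (cases "unimodular (N i)")
    case False
    then obtain Q where Q: "W i ** Wh i + N i ** Q = mat 1" using bezout i by blast
    have "\<exists>P. W j = N i ** P" if "j \<in> set xs - {i}" for j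
      unfolding W_def using i that by (intro mprod_left_factor pairwise_mono[OF pw]) auto
    then show ?thesis using rem i Q by (intro sum_congruent_to_component) auto
  qed (simp add: int_lattice_unimodular)
qed

lemma mat_rem_congruent_left_divisor:
  assumes "nonsingular M" "left_divisor N M"
  shows "m - mat_rem m M \<in> int_lattice N"
proof -
  obtain P where "M = N ** P" using assms(2) unfolding left_divisor_def by blast
  then show ?thesis
    using mat_rem(2)[OF assms(1), of m] int_lattice_matrix_mult_subset[of N P] by auto
qed

theorem corollary1:
  fixes L :: nat
    and M N :: "nat \<Rightarrow> int^'n^'n"
    and R U :: "int^'n^'n"
  defines "W \<equiv> (\<lambda>i. mprod (filter (\<lambda>j. j \<noteq> i) [1..<L+1]) N)"
  assumes M_ns: "\<forall>i\<in>{1..L}. nonsingular (M i)"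
    and lcrm: "is_lcrm L M R"
    and comm: "\<forall>i\<in>{1..L}. \<forall>j\<in>{1..L}. i \<noteq> j \<longrightarrow> N i ** N j = N j ** N i"
    and copr: "\<forall>i\<in>{1..L}. \<forall>j\<in>{1..L}. i \<noteq> j \<longrightarrow> coprime_mat (N i) (N j)"
    and U_unimod: "unimodular U"
    and R_eq: "R = mprod [1..<L+1] N ** U"
    and div: "\<forall>i\<in>{1..L}. left_divisor (N i) (M i)"
  shows "(\<forall>i\<in>{1..L}. \<not> unimodular (N i) \<longrightarrow>
            (\<exists>Wh Q. W i ** Wh + N i ** Q = mat 1))
       \<and> (\<forall>Wh :: nat \<Rightarrow> int^'n^'n.
            (\<forall>i\<in>{1..L}. (\<not> unimodular (N i) \<longrightarrow> (\<exists>Q. W i ** Wh i + N i ** Q = mat 1))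
                        \<and> (unimodular (N i) \<longrightarrow> Wh i = 0))
            \<longrightarrow> (\<forall>m\<in>fund_set R.
                   m = mat_rem (\<Sum>i=1..L. (W i ** Wh i) *v mat_rem m (M i)) R))"
proof -
  have set_xs: "set [1..<L+1] = {1..L}" by auto
  have ns: "nonsingular (N i)" if "i \<in> {1..L}" for i
    using div that by (simp add: left_divisor_def)
  have pw: "pairwise (\<lambda>a b. N a ** N b = N b ** N a \<and> comaximal (N a) (N b)) (set [1..<L+1])"
    unfolding set_xs pairwise_def using comm copr ns by (blast intro: coprime_mat_imp_comaximal)
  have "\<exists>Wh Q. W i ** Wh + N i ** Q = mat 1" if "i \<in> {1..L}" for i
    using comaximal_bezout[OF comaximal_sym[OF comaximal_mprod_others[OF pw]]] that
    unfolding W_def set_xs by blast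
  moreover have "m = mat_rem (\<Sum>i=1..L. (W i ** Wh i) *v mat_rem m (M i)) R"
    if Wh: "\<forall>i\<in>{1..L}. \<not> unimodular (N i) \<longrightarrow> (\<exists>Q. W i ** Wh i + N i ** Q = mat 1)"
      and m: "m \<in> fund_set R" for Wh m
  proof -
    have "(\<Sum>i\<in>set [1..<L+1]. (W i ** Wh i) *v mat_rem m (M i)) - m
        \<in> int_lattice (mprod [1..<L+1] N)"
      unfolding W_def
    proof (rule chinese_remainder_mprod[OF _ pw])
      show "\<forall>j\<in>set [1..<L+1]. det (N j) \<noteq> 0"
        using ns unfolding set_xs by (simp add: nonsingular_def)
      show "\<forall>i\<in>set [1..<L+1]. m - mat_rem m (M i) \<in> int_lattice (N i)"
        using M_ns div unfolding set_xs by (simp add: mat_rem_congruent_left_divisor)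
      show "\<forall>i\<in>set [1..<L+1]. \<not> unimodular (N i) \<longrightarrow>
          (\<exists>Q. mprod (filter (\<lambda>j. j \<noteq> i) [1..<L+1]) N ** Wh i + N i ** Q = mat 1)"
        using Wh unfolding set_xs W_def .
    qed simp
    then have "(\<Sum>i=1..L. (W i ** Wh i) *v mat_rem m (M i)) - m \<in> int_lattice R"
      unfolding set_xs R_eq int_lattice_mult_unimodular[OF U_unimod] .
    moreover have "nonsingular R" using lcrm by (simp add: is_lcrm_def)
    ultimately show ?thesis using m mat_rem_unique by metis
  qed
  ultimately show ?thesis by blast
qed

end
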